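(* If $A$ is an approximately unital Banach algebra, then the norm closure of $\mathbb{R}^+{\mathfrak F}_A=\{ta:t\ge0,\ a\in{\mathfrak F}_A\}$ equals ${\mathfrak r}_A$.
   Context: Banach algebras are complex with submultiplicative norm; "unital" means identity of norm 1; approximately unital means having a contractive approximate identity. Multiplier unitization $A^1$: $A$ if unital, otherwise $A+\mathbb{C}1$ with $\|a+\lambda1\|=\sup\{\|ac+\lambda c\|:c\in A,\|c\|\le1\}$. ${\mathfrak F}_A=\{a\in A:\|1-a\|_{A^1}\le1\}$; ${\mathfrak r}_A=\{a\in A:\mathrm{Re}\,\varphi(a)\ge0$ for all $\varphi\in(A^1)^*$ with $\|\varphi\|=\varphi(1)=1\}$. *)

theory Defs
  imports "HOL-Analysis.Analysis"
begin

text \<open>A complex Banach algebra is modelled as a type of class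
  real_normed_algebra + banach (associative, submultiplicative norm, complete,
  not necessarily unital or commutative) together with an operator J
  ("multiplication by i") turning it into a complex algebra.\<close>

definition cscale :: "('a::real_vector \<Rightarrow> 'a) \<Rightarrow> complex \<Rightarrow> 'a \<Rightarrow> 'a" where
  "cscale J c x = Re c *\<^sub>R x + Im c *\<^sub>R J x"

definition complex_banach_algebra :: "('a::{real_normed_algebra,banach} \<Rightarrow> 'a) \<Rightarrow> bool" where
  "complex_banach_algebra J \<longleftrightarrow>
     (\<forall>x y. J (x + y) = J x + J y) \<and>
     (\<forall>r x. J (r *\<^sub>R x) = r *\<^sub>R J x) \<and>
     (\<forall>x. J (J x) = - x) \<and>
     (\<forall>x y. J (x * y) = J x * y \<and> J (x * y) = x * J y) \<and>
     (\<forall>c x. norm (cscale J c x) = cmod c * norm x)"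

definition is_unit_id :: "'a::real_normed_algebra \<Rightarrow> bool" where
  "is_unit_id e \<longleftrightarrow> (\<forall>x. e * x = x \<and> x * e = x) \<and> norm e = 1"

definition unital :: "'a::real_normed_algebra itself \<Rightarrow> bool" where
  "unital _ \<longleftrightarrow> (\<exists>e::'a. is_unit_id e)"

definition unit_id :: "'a::real_normed_algebra" where
  "unit_id = (SOME e. is_unit_id e)"

text \<open>Approximately unital: there is a contractive approximate identity, i.e. a
  net (encoded as a proper filter on A) of elements of norm at most 1 with
  e_t a \<rightarrow> a and a e_t \<rightarrow> a for all a.\<close>
definition approx_unital :: "'a::real_normed_algebra itself \<Rightarrow> bool" where
  "approx_unital _ \<longleftrightarrow> (\<exists>F::'a filter. F \<noteq> bot \<and> F \<le> principal {x. norm x \<le> 1} \<and>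
       (\<forall>a. ((\<lambda>x. x * a) \<longlongrightarrow> a) F \<and> ((\<lambda>x. a * x) \<longlongrightarrow> a) F))"

text \<open>Norm in the multiplier unitization A^1 of the element a + \<lambda>1.
  If A is unital, A^1 = A and a + \<lambda>1 is a + \<lambda>e; otherwise the multiplier norm.\<close>
definition A1norm :: "('a::{real_normed_algebra,banach} \<Rightarrow> 'a) \<Rightarrow> 'a \<Rightarrow> complex \<Rightarrow> real" where
  "A1norm J a l =
     (if unital TYPE('a) then norm (a + cscale J l unit_id)
      else Sup {norm (a * c + cscale J l c) | c. norm c \<le> 1})"

text \<open>States of A^1 (complex linear functionals \<phi> with \<parallel>\<phi>\<parallel> = \<phi>(1) = 1).
  Unital case: functionals on A.\<close>
definition states_unital :: "('a::{real_normed_algebra,banach} \<Rightarrow> 'a) \<Rightarrow> ('a \<Rightarrow> complex) set" where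
  "states_unital J = {\<phi>.
     (\<forall>x y. \<phi> (x + y) = \<phi> x + \<phi> y) \<and> (\<forall>c x. \<phi> (cscale J c x) = c * \<phi> x) \<and>
     (\<exists>K. \<forall>x. cmod (\<phi> x) \<le> K * norm x) \<and>
     Sup {cmod (\<phi> x) | x. norm x \<le> 1} = 1 \<and> \<phi> unit_id = 1}"

text \<open>Non-unital case: A^1 = A \<oplus> \<complex>, element (a, l) standing for a + \<lambda>1.\<close>
definition states_nonunital :: "('a::{real_normed_algebra,banach} \<Rightarrow> 'a) \<Rightarrow> ('a \<Rightarrow> complex \<Rightarrow> complex) set" where
  "states_nonunital J = {\<psi>.
     (\<forall>a b l m. \<psi> (a + b) (l + m) = \<psi> a l + \<psi> b m) \<and>
     (\<forall>c a l. \<psi> (cscale J c a) (c * l) = c * \<psi> a l) \<and>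
     (\<exists>K. \<forall>a l. cmod (\<psi> a l) \<le> K * A1norm J a l) \<and>
     Sup {cmod (\<psi> a l) | a l. A1norm J a l \<le> 1} = 1 \<and> \<psi> 0 1 = 1}"

definition frakF :: "('a::{real_normed_algebra,banach} \<Rightarrow> 'a) \<Rightarrow> 'a set" where
  "frakF J = {a. A1norm J (- a) 1 \<le> 1}"

definition frakr :: "('a::{real_normed_algebra,banach} \<Rightarrow> 'a) \<Rightarrow> 'a set" where
  "frakr J = (if unital TYPE('a)
     then {a. \<forall>\<phi>\<in>states_unital J. Re (\<phi> a) \<ge> 0}
     else {a. \<forall>\<psi>\<in>states_nonunital J. Re (\<psi> a 0) \<ge> 0})"

end

theory Submission
  imports Defs
begin

text \<open>Every state takes values in the disc \<open>|1 - z| \<le> 1\<close> on \<open>\<FF>\<^sub>A\<close>, so the cone over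
  \<open>\<FF>\<^sub>A\<close> lies in \<open>\<rr>\<^sub>A\<close>, an intersection of closed half-spaces. Conversely, let
  \<open>a \<in> \<rr>\<^sub>A\<close>. Testing \<open>a\<close> against the vector states \<open>b \<mapsto> \<psi>(b w) / \<parallel>w\<parallel>\<close>, where
  \<open>\<psi>\<close> is a Hahn-Banach functional norming \<open>w\<close>, gives \<open>\<parallel>w\<parallel> \<le> \<parallel>w + t a w\<parallel>\<close> for \<open>t \<ge> 0\<close>.
  For small \<open>t > 0\<close> the Banach fixed point theorem gives \<open>y\<close> with \<open>(1 + t a)(1 - y) = 1\<close>,
  and then \<open>\<parallel>(1 - y) c\<parallel> \<le> \<parallel>(1 + t a)(1 - y) c\<parallel> = \<parallel>c\<parallel>\<close>, i.e. \<open>y \<in> \<FF>\<^sub>A\<close>, while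
  \<open>y / t = a - a y \<rightarrow> a\<close> as \<open>t \<rightarrow> 0\<close>.\<close>

section \<open>Hahn-Banach theorem\<close>

definition dominated_graph :: "('a::real_normed_vector \<times> real) set \<Rightarrow> bool" where
  "dominated_graph H \<longleftrightarrow> (0, 0) \<in> H \<and>
     (\<forall>x u y v. (x, u) \<in> H \<longrightarrow> (y, v) \<in> H \<longrightarrow> (x + y, u + v) \<in> H) \<and>
     (\<forall>r x u. (x, u) \<in> H \<longrightarrow> (r *\<^sub>R x, r * u) \<in> H) \<and>
     (\<forall>x u. (x, u) \<in> H \<longrightarrow> u \<le> norm x)"

lemma dominated_graphD:
  assumes "dominated_graph H"
  shows dominated_graph_zero: "(0, 0) \<in> H"
    and dominated_graph_add: "(x, u) \<in> H \<Longrightarrow> (y, v) \<in> H \<Longrightarrow> (x + y, u + v) \<in> H"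
    and dominated_graph_scaleR: "(x, u) \<in> H \<Longrightarrow> (r *\<^sub>R x, r * u) \<in> H"
    and dominated_graph_le_norm: "(x, u) \<in> H \<Longrightarrow> u \<le> norm x"
  using assms unfolding dominated_graph_def by blast+

lemma dominated_graph_unique:
  assumes H: "dominated_graph H" and "(x, u) \<in> H" "(x, v) \<in> H"
  shows "u = v"
proof -
  have "(x + (-1) *\<^sub>R x, u + (-1) * v) \<in> H" "(x + (-1) *\<^sub>R x, v + (-1) * u) \<in> H"
    using assms by (blast intro: dominated_graph_add dominated_graph_scaleR)+
  then have "u + (-1) * v \<le> 0" "v + (-1) * u \<le> 0"
    using dominated_graph_le_norm[OF H] by fastforce+
  then show ?thesis by simp
qed

lemma dominated_graph_Union_chain:
  assumes "C \<noteq> {}" and "\<And>H. H \<in> C \<Longrightarrow> dominated_graph H"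
    and chain: "\<And>H K. H \<in> C \<Longrightarrow> K \<in> C \<Longrightarrow> H \<subseteq> K \<or> K \<subseteq> H"
  shows "dominated_graph (\<Union>C)"
  unfolding dominated_graph_def
proof (intro conjI allI impI)
  show "(0, 0) \<in> \<Union>C"
    using assms(1,2) dominated_graph_zero by blast
  fix x u y v
  assume "(x, u) \<in> \<Union>C" "(y, v) \<in> \<Union>C"
  then obtain H K where "H \<in> C" "K \<in> C" "(x, u) \<in> H" "(y, v) \<in> K" by blast
  with chain[of H K] assms(2) show "(x + y, u + v) \<in> \<Union>C"
    by (metis UnionI dominated_graph_add subsetD)
next
  fix r x u
  assume "(x, u) \<in> \<Union>C"
  with assms(2) show "(r *\<^sub>R x, r * u) \<in> \<Union>C"
    by (blast intro: dominated_graph_scaleR)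
next
  fix x u
  assume "(x, u) \<in> \<Union>C"
  with assms(2) show "u \<le> norm x"
    by (blast intro: dominated_graph_le_norm)
qed

lemma dominated_graph_extension_constant:
  assumes H: "dominated_graph H"
  obtains c where "\<And>x u. (x, u) \<in> H \<Longrightarrow> u - norm (x - x0) \<le> c"
    and "\<And>x u. (x, u) \<in> H \<Longrightarrow> c \<le> norm (x + x0) - u"
proof
  define S where "S = {v - norm (y - x0) | y v. (y, v) \<in> H}"
  have below: "s \<le> norm (x + x0) - u" if "(x, u) \<in> H" "s \<in> S" for s x u
  proof -
    obtain y v where s: "s = v - norm (y - x0)" "(y, v) \<in> H"
      using \<open>s \<in> S\<close> S_def by blast
    have "u + v \<le> norm (x + y)"
      using H s(2) that(1) by (blast intro: dominated_graph_add dominated_graph_le_norm)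
    also have "\<dots> \<le> norm (x + x0) + norm (y - x0)"
      using norm_triangle_ineq[of "x + x0" "y - x0"] by (simp add: algebra_simps)
    finally show ?thesis using s by simp
  qed
  have "S \<noteq> {}"
    using dominated_graph_zero[OF H] S_def by blast
  then show "Sup S \<le> norm (x + x0) - u" if "(x, u) \<in> H" for x u
    using below[OF that] by (intro cSup_least) auto
  have "bdd_above S"
    using below[OF dominated_graph_zero[OF H]] by (intro bdd_aboveI) blast
  then show "u - norm (x - x0) \<le> Sup S" if "(x, u) \<in> H" for x u
    using that S_def by (intro cSup_upper) auto
qed

lemma dominated_graph_extend_le_norm:
  assumes H: "dominated_graph H"
    and lower: "\<And>x u. (x, u) \<in> H \<Longrightarrow> u - norm (x - x0) \<le> c"
    and upper: "\<And>x u. (x, u) \<in> H \<Longrightarrow> c \<le> norm (x + x0) - u"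
    and xu: "(x, u) \<in> H"
  shows "u + r * c \<le> norm (x + r *\<^sub>R x0)"
proof -
  consider "r = 0" | "r > 0" | "r < 0" by linarith
  then show ?thesis
  proof cases
    case 1
    then show ?thesis using dominated_graph_le_norm[OF H xu] by simp
  next
    case 2
    have "((1 / r) *\<^sub>R x, (1 / r) * u) \<in> H"
      using H xu by (rule dominated_graph_scaleR)
    then have "r * c \<le> r * (norm ((1 / r) *\<^sub>R x + x0) - (1 / r) * u)"
      using 2 upper by (simp add: mult_left_mono)
    also have "\<dots> = norm (r *\<^sub>R ((1 / r) *\<^sub>R x + x0)) - u"
      using 2 by (simp add: right_diff_distrib)
    finally show ?thesis
      using 2 by (simp add: scaleR_add_right)
  next
    case 3
    have "((-1 / r) *\<^sub>R x, (-1 / r) * u) \<in> H"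
      using H xu by (rule dominated_graph_scaleR)
    then have "- r * ((-1 / r) * u - norm ((-1 / r) *\<^sub>R x - x0)) \<le> - r * c"
      using 3 lower by (simp add: mult_left_mono)
    moreover have "- r * norm ((-1 / r) *\<^sub>R x - x0) = norm ((- r) *\<^sub>R ((-1 / r) *\<^sub>R x - x0))"
      using 3 by simp
    ultimately show ?thesis
      using 3 by (simp add: algebra_simps)
  qed
qed

lemma dominated_graph_extend:
  assumes H: "dominated_graph H"
    and lower: "\<And>x u. (x, u) \<in> H \<Longrightarrow> u - norm (x - x0) \<le> c"
    and upper: "\<And>x u. (x, u) \<in> H \<Longrightarrow> c \<le> norm (x + x0) - u"
  shows "dominated_graph {(x + r *\<^sub>R x0, u + r * c) | x u r. (x, u) \<in> H}"
  unfolding dominated_graph_def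
proof (intro conjI allI impI)
  show "(0, 0) \<in> {(x + r *\<^sub>R x0, u + r * c) | x u r. (x, u) \<in> H}"
    using dominated_graph_zero[OF H] by force
next
  fix x u y v
  assume "(x, u) \<in> {(x + r *\<^sub>R x0, u + r * c) | x u r. (x, u) \<in> H}"
    and "(y, v) \<in> {(x + r *\<^sub>R x0, u + r * c) | x u r. (x, u) \<in> H}"
  then obtain x1 u1 r1 x2 u2 r2 where "(x1, u1) \<in> H" "(x2, u2) \<in> H"
    and "x = x1 + r1 *\<^sub>R x0" "u = u1 + r1 * c" "y = x2 + r2 *\<^sub>R x0" "v = u2 + r2 * c"
    by blast
  moreover have "(x1 + x2, u1 + u2) \<in> H"
    using H calculation(1,2) by (rule dominated_graph_add)
  ultimately show "(x + y, u + v) \<in> {(x + r *\<^sub>R x0, u + r * c) | x u r. (x, u) \<in> H}"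
    by (intro CollectI exI[of _ "x1 + x2"] exI[of _ "u1 + u2"] exI[of _ "r1 + r2"])
      (simp add: algebra_simps)
next
  fix k x u
  assume "(x, u) \<in> {(x + r *\<^sub>R x0, u + r * c) | x u r. (x, u) \<in> H}"
  then obtain x1 u1 r1 where "(x1, u1) \<in> H" "x = x1 + r1 *\<^sub>R x0" "u = u1 + r1 * c"
    by blast
  moreover have "(k *\<^sub>R x1, k * u1) \<in> H"
    using H calculation(1) by (rule dominated_graph_scaleR)
  ultimately show "(k *\<^sub>R x, k * u) \<in> {(x + r *\<^sub>R x0, u + r * c) | x u r. (x, u) \<in> H}"
    by (intro CollectI exI[of _ "k *\<^sub>R x1"] exI[of _ "k * u1"] exI[of _ "k * r1"])
      (simp add: algebra_simps)
next
  fix x u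
  assume "(x, u) \<in> {(x + r *\<^sub>R x0, u + r * c) | x u r. (x, u) \<in> H}"
  then show "u \<le> norm x"
    using dominated_graph_extend_le_norm[OF H lower upper] by blast
qed

lemma dominated_graph_maximal_total:
  assumes H: "dominated_graph H"
    and maximal: "\<And>K. dominated_graph K \<Longrightarrow> H \<subseteq> K \<Longrightarrow> K = H"
  shows "\<exists>u. (x, u) \<in> H"
proof (rule ccontr)
  assume x: "\<nexists>u. (x, u) \<in> H"
  obtain c where "\<And>y u. (y, u) \<in> H \<Longrightarrow> u - norm (y - x) \<le> c"
    and "\<And>y u. (y, u) \<in> H \<Longrightarrow> c \<le> norm (y + x) - u"
    using dominated_graph_extension_constant[OF H] by blast
  then have K: "dominated_graph {(y + r *\<^sub>R x, u + r * c) | y u r. (y, u) \<in> H}"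
    by (rule dominated_graph_extend[OF H])
  have "(y, u) \<in> {(y + r *\<^sub>R x, u + r * c) | y u r. (y, u) \<in> H}" if "(y, u) \<in> H" for y u
    using that by (intro CollectI exI[of _ y] exI[of _ u] exI[of _ 0]) simp
  then have "H \<subseteq> {(y + r *\<^sub>R x, u + r * c) | y u r. (y, u) \<in> H}"
    by auto
  moreover have "(x, c) \<in> {(y + r *\<^sub>R x, u + r * c) | y u r. (y, u) \<in> H}"
    using dominated_graph_zero[OF H] by (intro CollectI exI[of _ 0] exI[of _ 0] exI[of _ 1]) simp
  ultimately show False
    using maximal[OF K] x by blast
qed

lemma dominated_graph_line: "dominated_graph {(r *\<^sub>R w, r * norm w) | r. True}"
  unfolding dominated_graph_def
proof (intro conjI allI impI)
  show "(0, 0) \<in> {(r *\<^sub>R w, r * norm w) | r. True}"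
    by (intro CollectI exI[of _ 0]) simp
  fix x u y v
  assume "(x, u) \<in> {(r *\<^sub>R w, r * norm w) | r. True}" "(y, v) \<in> {(r *\<^sub>R w, r * norm w) | r. True}"
  then obtain r s where "x = r *\<^sub>R w" "u = r * norm w" "y = s *\<^sub>R w" "v = s * norm w"
    by blast
  then show "(x + y, u + v) \<in> {(r *\<^sub>R w, r * norm w) | r. True}"
    by (intro CollectI exI[of _ "r + s"]) (simp add: algebra_simps)
next
  fix k x u
  assume "(x, u) \<in> {(r *\<^sub>R w, r * norm w) | r. True}"
  then obtain r where "x = r *\<^sub>R w" "u = r * norm w"
    by blast
  then show "(k *\<^sub>R x, k * u) \<in> {(r *\<^sub>R w, r * norm w) | r. True}"
    by (intro CollectI exI[of _ "k * r"]) simp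
next
  fix x u
  assume "(x, u) \<in> {(r *\<^sub>R w, r * norm w) | r. True}"
  then show "u \<le> norm x"
    by (auto simp add: mult_right_mono)
qed

lemma exists_maximal_dominated_graph:
  assumes "dominated_graph H0"
  obtains H where "dominated_graph H" "H0 \<subseteq> H"
    "\<And>K. dominated_graph K \<Longrightarrow> H \<subseteq> K \<Longrightarrow> K = H"
proof -
  have "\<Union>C \<in> {H. dominated_graph H \<and> H0 \<subseteq> H}"
    if "C \<noteq> {}" and chain: "subset.chain {H. dominated_graph H \<and> H0 \<subseteq> H} C" for C
  proof -
    have C: "C \<subseteq> {H. dominated_graph H \<and> H0 \<subseteq> H}"
      and comparable: "\<And>H K. H \<in> C \<Longrightarrow> K \<in> C \<Longrightarrow> H \<subseteq> K \<or> K \<subseteq> H"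
      using chain unfolding subset_chain_def by blast+
    have "dominated_graph (\<Union>C)"
      using \<open>C \<noteq> {}\<close> C comparable by (intro dominated_graph_Union_chain) auto
    moreover have "H0 \<subseteq> \<Union>C"
      using \<open>C \<noteq> {}\<close> C by blast
    ultimately show ?thesis by simp
  qed
  then obtain H where "H \<in> {H. dominated_graph H \<and> H0 \<subseteq> H}"
    and "\<forall>K \<in> {H. dominated_graph H \<and> H0 \<subseteq> H}. H \<subseteq> K \<longrightarrow> K = H"
    using subset_Zorn_nonempty[of "{H. dominated_graph H \<and> H0 \<subseteq> H}"] assms by blast
  then show ?thesis
    using that by auto
qed

lemma total_dominated_graph_linear:
  assumes H: "dominated_graph H" and total: "\<And>x. \<exists>u. (x, u) \<in> H"
  obtains f :: "'a::real_normed_vector \<Rightarrow> real"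
  where "linear f" "\<And>x. \<bar>f x\<bar> \<le> norm x" "\<And>x u. (x, u) \<in> H \<Longrightarrow> u = f x"
proof
  define f where "f x = (THE u. (x, u) \<in> H)" for x
  have "\<exists>!u. (x, u) \<in> H" for x
    using total dominated_graph_unique[OF H] by blast
  then have in_graph: "(x, f x) \<in> H" for x
    unfolding f_def by (rule theI')
  show graph: "u = f x" if "(x, u) \<in> H" for x u
    by (rule dominated_graph_unique[OF H that in_graph])
  show "linear f"
  proof (rule linearI)
    show "f (x + y) = f x + f y" for x y
      using graph[OF dominated_graph_add[OF H in_graph in_graph]] by simp
    show "f (r *\<^sub>R x) = r *\<^sub>R f x" for r x
      using graph[OF dominated_graph_scaleR[OF H in_graph]] by simp
  qed
  have "f x \<le> norm x" for x
    by (rule dominated_graph_le_norm[OF H in_graph])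
  moreover have "f (- x) = - f x" for x
    using graph[OF dominated_graph_scaleR[OF H in_graph, of "-1" x]] by simp
  ultimately show "\<bar>f x\<bar> \<le> norm x" for x
    by (metis abs_le_iff norm_minus_cancel)
qed

lemma exists_norming_functional:
  fixes w :: "'a::real_normed_vector"
  obtains f :: "'a \<Rightarrow> real" where "linear f" "\<And>x. \<bar>f x\<bar> \<le> norm x" "f w = norm w"
proof -
  obtain H where H: "dominated_graph H" "{(r *\<^sub>R w, r * norm w) | r. True} \<subseteq> H"
    and maximal: "\<And>K. dominated_graph K \<Longrightarrow> H \<subseteq> K \<Longrightarrow> K = H"
    using exists_maximal_dominated_graph[OF dominated_graph_line] by blast
  obtain f where f: "linear f" "\<And>x. \<bar>f x\<bar> \<le> norm x"
    and graph: "\<And>x u. (x, u) \<in> H \<Longrightarrow> u = f x"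
    using total_dominated_graph_linear[OF H(1) dominated_graph_maximal_total[OF H(1) maximal]]
    by blast
  have "(w, norm w) \<in> {(r *\<^sub>R w, r * norm w) | r. True}"
    by (intro CollectI exI[of _ 1]) simp
  then have "norm w = f w"
    using H(2) graph by blast
  with f show ?thesis
    by (intro that) simp_all
qed

section \<open>Complex structure\<close>

lemma complex_banach_algebraD:
  assumes "complex_banach_algebra J"
  shows J_add: "J (x + y) = J x + J y"
    and J_scaleR: "J (r *\<^sub>R x) = r *\<^sub>R J x"
    and J_J: "J (J x) = - x"
    and J_mult_left: "J (x * y) = J x * y"
    and norm_cscale: "norm (cscale J c x) = cmod c * norm x"
  using assms unfolding complex_banach_algebra_def by blast+

lemma cscale_one [simp]: "cscale J 1 x = x"
  and cscale_zero [simp]: "cscale J 0 x = 0"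
  and cscale_of_real: "cscale J (complex_of_real r) x = r *\<^sub>R x"
  and cscale_add_left: "cscale J (c + d) x = cscale J c x + cscale J d x"
  by (simp_all add: cscale_def scaleR_left_distrib)

context
  fixes J :: "'a::{real_normed_algebra,banach} \<Rightarrow> 'a"
  assumes J: "complex_banach_algebra J"
begin

lemma J_zero: "J 0 = 0"
  using J_add[OF J, of 0 0] by simp

lemma cscale_zero_right [simp]: "cscale J c 0 = 0"
  by (simp add: cscale_def J_zero)

lemma cscale_add_right: "cscale J c (x + y) = cscale J c x + cscale J c y"
  by (simp add: cscale_def J_add[OF J] scaleR_add_right)

lemma cscale_scaleR: "cscale J c (r *\<^sub>R x) = r *\<^sub>R cscale J c x"
  by (simp add: cscale_def J_scaleR[OF J] scaleR_add_right mult.commute)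

lemma cscale_mult_left: "cscale J c x * y = cscale J c (x * y)"
  by (simp add: cscale_def J_mult_left[OF J] distrib_right)

lemma cscale_cscale: "cscale J c (cscale J d x) = cscale J (c * d) x"
  by (simp add: cscale_def J_add[OF J] J_scaleR[OF J] J_J[OF J] algebra_simps)

end

definition complex_linear :: "('a::real_vector \<Rightarrow> 'a) \<Rightarrow> ('a \<Rightarrow> complex) \<Rightarrow> bool" where
  "complex_linear J \<psi> \<longleftrightarrow> (\<forall>x y. \<psi> (x + y) = \<psi> x + \<psi> y) \<and> (\<forall>c x. \<psi> (cscale J c x) = c * \<psi> x)"

lemma complex_linearD:
  assumes "complex_linear J \<psi>"
  shows complex_linear_add: "\<psi> (x + y) = \<psi> x + \<psi> y"
    and complex_linear_cscale: "\<psi> (cscale J c x) = c * \<psi> x"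
    and complex_linear_scaleR: "\<psi> (r *\<^sub>R x) = complex_of_real r * \<psi> x"
  using assms unfolding complex_linear_def by (metis cscale_of_real)+

text \<open>A norm bound on \<open>f\<close> transfers to \<open>\<psi>\<close> by rotating \<open>x\<close> so that \<open>\<psi> x\<close> becomes real.\<close>
lemma complexify_functional:
  fixes J :: "'a::{real_normed_algebra,banach} \<Rightarrow> 'a" and f :: "'a \<Rightarrow> real"
  assumes J: "complex_banach_algebra J" and f: "linear f" and bound: "\<And>x. \<bar>f x\<bar> \<le> norm x"
  defines "\<psi> x \<equiv> Complex (f x) (- f (J x))"
  shows "complex_linear J \<psi>" and "cmod (\<psi> x) \<le> norm x"
proof -
  have \<psi>_J: "\<psi> (J x) = \<i> * \<psi> x" for x
    unfolding \<psi>_def by (simp add: J_J[OF J] linear_neg[OF f] complex_eq_iff)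
  have add: "\<psi> (x + y) = \<psi> x + \<psi> y" for x y
    unfolding \<psi>_def by (simp add: J_add[OF J] linear_add[OF f] complex_eq_iff)
  have scaleR: "\<psi> (r *\<^sub>R x) = complex_of_real r * \<psi> x" for r x
    unfolding \<psi>_def by (simp add: J_scaleR[OF J] linear_scale[OF f] complex_eq_iff)
  have cscale: "\<psi> (cscale J c x) = c * \<psi> x" for c x
  proof -
    have "\<psi> (cscale J c x) = (complex_of_real (Re c) + \<i> * complex_of_real (Im c)) * \<psi> x"
      unfolding cscale_def by (simp add: add scaleR \<psi>_J algebra_simps)
    then show ?thesis
      by (simp add: complex_eq_iff)
  qed
  show "complex_linear J \<psi>"
    unfolding complex_linear_def using add cscale by blast
  define c where "c = cnj (sgn (\<psi> x))"
  have "c * \<psi> x = complex_of_real (cmod (\<psi> x))"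
  proof (cases "\<psi> x = 0")
    case False
    then show ?thesis
      unfolding c_def
      by (simp add: sgn_eq divide_simps mult.commute[of "cnj _"]
          flip: of_real_mult complex_norm_square power2_eq_square)
  qed (simp add: c_def)
  then have "cmod (\<psi> x) = f (cscale J c x)"
    using cscale by (metis Re_complex_of_real \<psi>_def complex.sel(1))
  also have "\<dots> \<le> norm (cscale J c x)"
    using bound abs_le_D1 by blast
  also have "\<dots> \<le> norm x"
    unfolding c_def norm_cscale[OF J] by (simp add: norm_sgn mult_left_le_one_le)
  finally show "cmod (\<psi> x) \<le> norm x" .
qed

lemma exists_complex_norming_functional:
  fixes J :: "'a::{real_normed_algebra,banach} \<Rightarrow> 'a"
  assumes J: "complex_banach_algebra J"
  obtains \<psi> where "complex_linear J \<psi>" "\<And>x. cmod (\<psi> x) \<le> norm x"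
    "\<psi> w = complex_of_real (norm w)"
proof -
  obtain f where f: "linear f" "\<And>x. \<bar>f x\<bar> \<le> norm x" and fw: "f w = norm w"
    using exists_norming_functional[of w] by blast
  define \<psi> where "\<psi> x = Complex (f x) (- f (J x))" for x
  have lin: "complex_linear J \<psi>" and bound: "cmod (\<psi> x) \<le> norm x" for x
    using complexify_functional[OF J f] unfolding \<psi>_def by blast+
  have "cmod (\<psi> w) \<le> Re (\<psi> w)"
    using bound[of w] fw by (simp add: \<psi>_def)
  then have "Im (\<psi> w) = 0"
    by (metis Im_eq_0 abs_norm_cancel complex_Re_le_cmod order_class.order_eq_iff)
  then have "\<psi> w = complex_of_real (norm w)"
    using fw by (simp add: \<psi>_def complex_eq_iff)
  with lin bound show ?thesis by (rule that)
qed

section \<open>The unitization\<close>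

lemma exists_right_inverse_one_plus:
  fixes x :: "'a::{real_normed_algebra,banach}"
  assumes x: "norm x < 1"
  obtains y where "y + x * y = x" and "(1 - norm x) * norm y \<le> norm x"
proof -
  have "dist (x - x * u) (x - x * v) \<le> norm x * dist u v" for u v
    using norm_mult_ineq[of x "v - u"] by (simp add: dist_norm algebra_simps norm_minus_commute)
  then obtain y where y: "x - x * y = y"
    using banach_fix_type[of "norm x" "\<lambda>y. x - x * y"] x by auto
  have "norm y \<le> norm x + norm x * norm y"
    using norm_triangle_ineq4[of x "x * y"] norm_mult_ineq[of x y] y by simp
  then have "(1 - norm x) * norm y \<le> norm x"
    by (simp add: algebra_simps)
  moreover have "y + x * y = x"
    using y by (simp add: algebra_simps)
  ultimately show ?thesis
    using that by blast
qed

lemma is_unit_id_unit_id: "unital TYPE('a::real_normed_algebra) \<Longrightarrow> is_unit_id (unit_id :: 'a)"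
  unfolding unital_def unit_id_def by (rule someI_ex)

lemma A1norm_unital:
  "unital TYPE('a) \<Longrightarrow> A1norm J (a :: 'a::{real_normed_algebra,banach}) l = norm (a + cscale J l unit_id)"
  unfolding A1norm_def by simp

context
  fixes J :: "'a::{real_normed_algebra,banach} \<Rightarrow> 'a"
  assumes J: "complex_banach_algebra J"
    and nonunital: "\<not> unital TYPE('a)"
begin

lemma A1norm_bdd_above: "bdd_above {norm (a * c + cscale J l c) | c. norm c \<le> 1}"
proof (rule bdd_aboveI)
  fix z
  assume "z \<in> {norm (a * c + cscale J l c) | c. norm c \<le> 1}"
  then obtain c where z: "z = norm (a * c + cscale J l c)" and c: "norm c \<le> 1"
    by blast
  have "z \<le> norm a * norm c + cmod l * norm c"
    unfolding z by (metis norm_cscale[OF J] norm_triangle_le norm_mult_ineq add_right_mono)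
  also have "\<dots> \<le> norm a + cmod l"
    using c by (intro add_mono mult_left_le) auto
  finally show "z \<le> norm a + cmod l" .
qed

lemma A1norm_ge: "norm c \<le> 1 \<Longrightarrow> norm (a * c + cscale J l c) \<le> A1norm J a l"
  unfolding A1norm_def using nonunital by (auto intro!: cSup_upper A1norm_bdd_above)

lemma A1norm_le:
  assumes "\<And>c. norm c \<le> 1 \<Longrightarrow> norm (a * c + cscale J l c) \<le> B"
  shows "A1norm J a l \<le> B"
  unfolding A1norm_def using nonunital assms by (auto intro!: cSup_least exI[of _ 0])

lemma A1norm_nonneg: "0 \<le> A1norm J a l"
  using A1norm_ge[of 0 a l] by (simp add: cscale_zero_right[OF J])

lemma A1norm_scaleR_le:
  assumes "0 < r"
  shows "A1norm J (r *\<^sub>R a) (complex_of_real r * l) \<le> r * A1norm J a l"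
proof (rule A1norm_le)
  fix c :: 'a
  assume "norm c \<le> 1"
  have "r *\<^sub>R a * c + cscale J (complex_of_real r * l) c = r *\<^sub>R (a * c + cscale J l c)"
    by (simp add: cscale_cscale[OF J, symmetric] cscale_of_real scaleR_add_right)
  then show "norm (r *\<^sub>R a * c + cscale J (complex_of_real r * l) c) \<le> r * A1norm J a l"
    using assms A1norm_ge[OF \<open>norm c \<le> 1\<close>] by (simp add: mult_left_mono)
qed

lemma A1norm_le_norm: "A1norm J a 0 \<le> norm a"
  by (rule A1norm_le) (simp, metis mult_left_le norm_ge_zero norm_mult_ineq order_trans)

end

section \<open>States and accretivity\<close>

lemma states_unital_complex_linear: "\<phi> \<in> states_unital J \<Longrightarrow> complex_linear J \<phi>"
  unfolding states_unital_def complex_linear_def by blast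

lemma le_of_Sup_unit_ball_le_one:
  fixes g N :: "'v \<Rightarrow> real" and sc :: "real \<Rightarrow> 'v \<Rightarrow> 'v"
  assumes bound: "\<And>v. g v \<le> K * N v" and nonneg: "\<And>v. 0 \<le> N v"
    and N_sc: "\<And>r v. 0 < r \<Longrightarrow> N (sc r v) \<le> r * N v"
    and g_sc: "\<And>r v. 0 < r \<Longrightarrow> g (sc r v) = r * g v"
    and Sup: "Sup {g v | v. N v \<le> 1} \<le> 1"
  shows "g v \<le> N v"
proof (cases "N v = 0")
  case True
  then show ?thesis using bound[of v] by simp
next
  case False
  then have s: "0 < N v" using nonneg[of v] by simp
  have "bdd_above {g v | v. N v \<le> 1}"
  proof (rule bdd_aboveI)
    fix z
    assume "z \<in> {g v | v. N v \<le> 1}"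
    then obtain u where z: "z = g u" and u: "N u \<le> 1" by blast
    have "g u \<le> \<bar>K\<bar> * N u"
      using bound[of u] nonneg[of u] by (meson abs_ge_self mult_right_mono order_trans)
    also have "\<dots> \<le> \<bar>K\<bar>"
      using u by (simp add: mult_left_le)
    finally show "z \<le> \<bar>K\<bar>" unfolding z .
  qed
  moreover have "N (sc (1 / N v) v) \<le> 1"
    using N_sc[of "1 / N v" v] s by simp
  ultimately have "g (sc (1 / N v) v) \<le> Sup {g v | v. N v \<le> 1}"
    by (intro cSup_upper) auto
  then have "g (sc (1 / N v) v) \<le> 1"
    using Sup by linarith
  then show ?thesis
    using g_sc[of "1 / N v" v] s by (simp add: field_simps)
qed

context
  fixes J :: "'a::{real_normed_algebra,banach} \<Rightarrow> 'a"
  assumes J: "complex_banach_algebra J"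
begin

lemma states_unital_bound:
  assumes "\<phi> \<in> states_unital J"
  shows "cmod (\<phi> x) \<le> norm x"
proof -
  obtain K where K: "\<And>x. cmod (\<phi> x) \<le> K * norm x"
    and Sup: "Sup {cmod (\<phi> x) | x. norm x \<le> 1} = 1"
    using assms unfolding states_unital_def by blast
  show ?thesis
  proof (rule le_of_Sup_unit_ball_le_one[where g = "\<lambda>x. cmod (\<phi> x)" and N = norm and sc = scaleR])
    show "cmod (\<phi> (r *\<^sub>R x)) = r * cmod (\<phi> x)" if "0 < r" for r x
      using that complex_linear_scaleR[OF states_unital_complex_linear[OF assms]]
      by (simp add: norm_mult)
  qed (use K Sup in auto)
qed

lemma states_nonunital_bound:
  assumes nonunital: "\<not> unital TYPE('a)" and \<psi>: "\<psi> \<in> states_nonunital J"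
  shows "cmod (\<psi> a l) \<le> A1norm J a l"
proof -
  obtain K where K: "\<And>a l. cmod (\<psi> a l) \<le> K * A1norm J a l"
    and Sup: "Sup {cmod (\<psi> a l) | a l. A1norm J a l \<le> 1} = 1"
    and hom: "\<And>c a l. \<psi> (cscale J c a) (c * l) = c * \<psi> a l"
    using \<psi> unfolding states_nonunital_def by blast
  have "cmod (case_prod \<psi> (a, l)) \<le> case_prod (A1norm J) (a, l)"
  proof (rule le_of_Sup_unit_ball_le_one[where g = "\<lambda>v. cmod (case_prod \<psi> v)"
        and N = "case_prod (A1norm J)" and sc = "\<lambda>r (a, l). (r *\<^sub>R a, complex_of_real r * l)"])
    show "cmod (case_prod \<psi> v) \<le> K * case_prod (A1norm J) v" for v
      using K by (simp split: prod.split)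
    show "0 \<le> case_prod (A1norm J) v" for v
      using A1norm_nonneg[OF J nonunital] by (simp split: prod.split)
    show "case_prod (A1norm J) ((\<lambda>r (a, l). (r *\<^sub>R a, complex_of_real r * l)) r v)
        \<le> r * case_prod (A1norm J) v" if "0 < r" for r v
      using A1norm_scaleR_le[OF J nonunital that] by (simp split: prod.split)
    show "cmod (case_prod \<psi> ((\<lambda>r (a, l). (r *\<^sub>R a, complex_of_real r * l)) r v))
        = r * cmod (case_prod \<psi> v)" if "0 < r" for r v
      using that hom[of "complex_of_real r"] by (simp add: cscale_of_real norm_mult split: prod.split)
    have "{cmod (case_prod \<psi> v) | v. case_prod (A1norm J) v \<le> 1}
        = {cmod (\<psi> a l) | a l. A1norm J a l \<le> 1}"
      by auto
    then show "Sup {cmod (case_prod \<psi> v) | v. case_prod (A1norm J) v \<le> 1} \<le> 1"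
      using Sup by simp
  qed
  then show ?thesis by simp
qed

lemma vector_state_unital:
  assumes unital: "unital TYPE('a)" and \<psi>: "complex_linear J \<psi>"
    and bound: "\<And>x. cmod (\<psi> x) \<le> norm x" and w: "\<psi> w = complex_of_real (norm w)" "w \<noteq> 0"
  shows "(\<lambda>b. \<psi> (b * w) / complex_of_real (norm w)) \<in> states_unital J"
proof -
  define \<phi> where "\<phi> b = \<psi> (b * w) / complex_of_real (norm w)" for b
  have e: "unit_id * w = w" "norm (unit_id :: 'a) = 1"
    using is_unit_id_unit_id[OF unital] unfolding is_unit_id_def by auto
  have \<phi>_bound: "cmod (\<phi> x) \<le> norm x" for x
  proof -
    have "cmod (\<phi> x) \<le> norm (x * w) / norm w"
      unfolding \<phi>_def using bound[of "x * w"] by (simp add: norm_divide divide_right_mono)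
    also have "\<dots> \<le> norm x"
      using w(2) norm_mult_ineq[of x w] by (simp add: pos_divide_le_eq)
    finally show ?thesis .
  qed
  have \<phi>_one: "\<phi> unit_id = 1"
    unfolding \<phi>_def using e w by simp
  have "Sup {cmod (\<phi> x) | x. norm x \<le> 1} = 1"
  proof (rule cSup_eq_maximum)
    show "1 \<in> {cmod (\<phi> x) | x. norm x \<le> 1}"
      using \<phi>_one e by (intro CollectI exI[of _ unit_id]) simp
  qed (use \<phi>_bound order_trans in blast)
  moreover have "complex_linear J \<phi>"
    unfolding complex_linear_def \<phi>_def
    by (simp add: distrib_right complex_linear_add[OF \<psi>] add_divide_distrib
        cscale_mult_left[OF J] complex_linear_cscale[OF \<psi>])
  ultimately show ?thesis
    using \<phi>_bound \<phi>_one unfolding states_unital_def complex_linear_def \<phi>_def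
    by (auto intro: exI[of _ 1])
qed

lemma vector_state_nonunital:
  assumes nonunital: "\<not> unital TYPE('a)" and \<psi>: "complex_linear J \<psi>"
    and bound: "\<And>x. cmod (\<psi> x) \<le> norm x" and w: "\<psi> w = complex_of_real (norm w)" "w \<noteq> 0"
  shows "(\<lambda>b l. \<psi> (b * w + cscale J l w) / complex_of_real (norm w)) \<in> states_nonunital J"
proof -
  define \<Phi> where "\<Phi> b l = \<psi> (b * w + cscale J l w) / complex_of_real (norm w)" for b l
  have \<Phi>_bound: "cmod (\<Phi> b l) \<le> A1norm J b l" for b l
  proof -
    define c where "c = (1 / norm w) *\<^sub>R w"
    have "cmod (\<Phi> b l) \<le> norm (b * w + cscale J l w) / norm w"
      unfolding \<Phi>_def using bound by (simp add: norm_divide divide_right_mono)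
    also have "\<dots> = norm (b * c + cscale J l c)"
      unfolding c_def using w(2)
      by (simp add: cscale_scaleR[OF J] scaleR_add_right[symmetric] divide_inverse)
    also have "\<dots> \<le> A1norm J b l"
      using w(2) unfolding c_def by (intro A1norm_ge[OF J nonunital]) simp
    finally show ?thesis .
  qed
  have \<Phi>_one: "\<Phi> 0 1 = 1"
    unfolding \<Phi>_def using w by simp
  have "Sup {cmod (\<Phi> a l) | a l. A1norm J a l \<le> 1} = 1"
  proof (rule cSup_eq_maximum)
    show "1 \<in> {cmod (\<Phi> a l) | a l. A1norm J a l \<le> 1}"
      using \<Phi>_one A1norm_le[OF J nonunital, of 0 1 1]
      by (intro CollectI exI[of _ 0] exI[of _ 1]) simp
  qed (use \<Phi>_bound order_trans in blast)
  moreover have "\<Phi> (a + b) (l + m) = \<Phi> a l + \<Phi> b m" for a b l m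
    unfolding \<Phi>_def
    by (simp add: distrib_right complex_linear_add[OF \<psi>] add_divide_distrib cscale_add_left
        algebra_simps)
  moreover have "\<Phi> (cscale J c a) (c * l) = c * \<Phi> a l" for c a l
    unfolding \<Phi>_def
    by (simp add: cscale_mult_left[OF J] cscale_cscale[OF J, symmetric]
        cscale_add_right[OF J, symmetric] complex_linear_cscale[OF \<psi>])
  ultimately show ?thesis
    using \<Phi>_bound \<Phi>_one unfolding states_nonunital_def \<Phi>_def
    by (auto intro: exI[of _ 1])
qed

lemma frakr_nonneg_at_vector:
  assumes a: "a \<in> frakr J" and \<psi>: "complex_linear J \<psi>"
    and bound: "\<And>x. cmod (\<psi> x) \<le> norm x" and w: "\<psi> w = complex_of_real (norm w)" "w \<noteq> 0"
  shows "0 \<le> Re (\<psi> (a * w))"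
proof (cases "unital TYPE('a)")
  case True
  then have "0 \<le> Re (\<psi> (a * w) / complex_of_real (norm w))"
    using a vector_state_unital[OF True \<psi> bound w] unfolding frakr_def by auto
  then show ?thesis
    using w(2) by (simp add: Re_divide_of_real zero_le_divide_iff)
next
  case False
  then have "0 \<le> Re (\<psi> (a * w + cscale J 0 w) / complex_of_real (norm w))"
    using a vector_state_nonunital[OF False \<psi> bound w] unfolding frakr_def by auto
  then show ?thesis
    using w(2) by (simp add: Re_divide_of_real zero_le_divide_iff)
qed

lemma frakr_accretive:
  assumes a: "a \<in> frakr J" and t: "0 \<le> t"
  shows "norm w \<le> norm (w + t *\<^sub>R (a * w))"
proof (cases "w = 0")
  case False
  obtain \<psi> where \<psi>: "complex_linear J \<psi>" and bound: "\<And>x. cmod (\<psi> x) \<le> norm x"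
    and \<psi>_w: "\<psi> w = complex_of_real (norm w)"
    using exists_complex_norming_functional[OF J] by metis
  have "norm w \<le> Re (\<psi> w) + t * Re (\<psi> (a * w))"
    using \<psi>_w t frakr_nonneg_at_vector[OF a \<psi> bound \<psi>_w False] by simp
  also have "\<dots> = Re (\<psi> (w + t *\<^sub>R (a * w)))"
    by (simp add: complex_linear_add[OF \<psi>] complex_linear_scaleR[OF \<psi>])
  also have "\<dots> \<le> norm (w + t *\<^sub>R (a * w))"
    using complex_Re_le_cmod bound order_trans by blast
  finally show ?thesis .
qed simp

end

section \<open>The cone over \<open>\<FF>\<^sub>A\<close>\<close>

definition restricted_states :: "('a::{real_normed_algebra,banach} \<Rightarrow> 'a) \<Rightarrow> ('a \<Rightarrow> complex) set" where
  "restricted_states J =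
     (if unital TYPE('a) then states_unital J else (\<lambda>\<psi> a. \<psi> a 0) ` states_nonunital J)"

lemma frakr_eq_restricted_states: "frakr J = {a. \<forall>\<phi>\<in>restricted_states J. 0 \<le> Re (\<phi> a)}"
  unfolding frakr_def restricted_states_def by auto

context
  fixes J :: "'a::{real_normed_algebra,banach} \<Rightarrow> 'a"
  assumes J: "complex_banach_algebra J"
begin

lemma restricted_stateD:
  assumes "\<phi> \<in> restricted_states J"
  shows restricted_state_add: "\<phi> (x + y) = \<phi> x + \<phi> y"
    and restricted_state_scaleR: "\<phi> (r *\<^sub>R x) = complex_of_real r * \<phi> x"
    and restricted_state_bound: "cmod (\<phi> x) \<le> norm x"
    and restricted_state_one_minus: "cmod (1 - \<phi> x) \<le> A1norm J (- x) 1"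
proof -
  have "\<phi> (x + y) = \<phi> x + \<phi> y \<and> \<phi> (r *\<^sub>R x) = complex_of_real r * \<phi> x \<and>
    cmod (\<phi> x) \<le> norm x \<and> cmod (1 - \<phi> x) \<le> A1norm J (- x) 1"
  proof (cases "unital TYPE('a)")
    case True
    then have \<phi>: "\<phi> \<in> states_unital J"
      using assms unfolding restricted_states_def by simp
    have lin: "complex_linear J \<phi>"
      by (rule states_unital_complex_linear[OF \<phi>])
    have "\<phi> unit_id = 1"
      using \<phi> unfolding states_unital_def by blast
    then have "\<phi> (- x + cscale J 1 unit_id) = 1 - \<phi> x"
      using complex_linear_add[OF lin, of "- x" unit_id] complex_linear_scaleR[OF lin, of "-1" x]
      by simp
    then have "cmod (1 - \<phi> x) \<le> A1norm J (- x) 1"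
      using states_unital_bound[OF J \<phi>] A1norm_unital[OF True] by metis
    then show ?thesis
      using complex_linear_add[OF lin] complex_linear_scaleR[OF lin] states_unital_bound[OF J \<phi>]
      by blast
  next
    case False
    then obtain \<psi> where \<psi>: "\<psi> \<in> states_nonunital J" and \<phi>: "\<phi> = (\<lambda>a. \<psi> a 0)"
      using assms unfolding restricted_states_def by auto
    have add: "\<And>a b l m. \<psi> (a + b) (l + m) = \<psi> a l + \<psi> b m"
      and hom: "\<And>c a l. \<psi> (cscale J c a) (c * l) = c * \<psi> a l" and one: "\<psi> 0 1 = 1"
      using \<psi> unfolding states_nonunital_def by blast+
    have scaleR: "\<psi> (r *\<^sub>R a) 0 = complex_of_real r * \<psi> a 0" for r a
      using hom[of "complex_of_real r" a 0] by (simp add: cscale_of_real)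
    have "cmod (\<psi> x 0) \<le> norm x"
      using states_nonunital_bound[OF J False \<psi>] A1norm_le_norm[OF J False] order_trans by blast
    moreover have "\<psi> (- x) 1 = 1 - \<psi> x 0"
      using add[of "- x" 0 0 1] scaleR[of "-1" x] one by simp
    then have "cmod (1 - \<psi> x 0) \<le> A1norm J (- x) 1"
      using states_nonunital_bound[OF J False \<psi>] by metis
    ultimately show ?thesis
      unfolding \<phi> using add[of x y 0 0] scaleR by simp
  qed
  then show "\<phi> (x + y) = \<phi> x + \<phi> y" "\<phi> (r *\<^sub>R x) = complex_of_real r * \<phi> x"
    "cmod (\<phi> x) \<le> norm x" "cmod (1 - \<phi> x) \<le> A1norm J (- x) 1"
    by blast+
qed

lemma bounded_linear_restricted_state:
  assumes "\<phi> \<in> restricted_states J"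
  shows "bounded_linear \<phi>"
  by (rule bounded_linear_intro[where K = 1])
    (simp_all add: restricted_stateD[OF assms] scaleR_conv_of_real)

lemma restricted_state_nonneg_frakF:
  assumes "\<phi> \<in> restricted_states J" and "x \<in> frakF J"
  shows "0 \<le> Re (\<phi> x)"
proof -
  have "Re (1 - \<phi> x) \<le> 1"
    using restricted_state_one_minus[OF assms(1), of x] assms(2) unfolding frakF_def
    by (meson complex_Re_le_cmod mem_Collect_eq order_trans)
  then show ?thesis by simp
qed

lemma closed_frakr: "closed (frakr J)"
proof -
  have "closed {a. 0 \<le> Re (\<phi> a)}" if "\<phi> \<in> restricted_states J" for \<phi>
  proof (rule closed_Collect_le)
    show "continuous_on UNIV (\<lambda>a. Re (\<phi> a))"
      by (rule linear_continuous_on, rule bounded_linear_compose[OF bounded_linear_Re],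
          rule bounded_linear_restricted_state[OF that])
  qed (rule continuous_on_const)
  then have "closed (\<Inter>\<phi>\<in>restricted_states J. {a. 0 \<le> Re (\<phi> a)})"
    by (intro closed_INT ballI)
  moreover have "frakr J = (\<Inter>\<phi>\<in>restricted_states J. {a. 0 \<le> Re (\<phi> a)})"
    unfolding frakr_eq_restricted_states by auto
  ultimately show ?thesis by simp
qed

lemma cone_frakF_subset_frakr: "{t *\<^sub>R a | t a. 0 \<le> t \<and> a \<in> frakF J} \<subseteq> frakr J"
proof
  fix z
  assume "z \<in> {t *\<^sub>R a | t a. 0 \<le> t \<and> a \<in> frakF J}"
  then obtain t a where z: "z = t *\<^sub>R a" and t: "0 \<le> t" and a: "a \<in> frakF J"
    by blast
  show "z \<in> frakr J"
    unfolding frakr_eq_restricted_states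
  proof (intro CollectI ballI)
    fix \<phi>
    assume \<phi>: "\<phi> \<in> restricted_states J"
    show "0 \<le> Re (\<phi> z)"
      using t restricted_state_nonneg_frakF[OF \<phi> a] unfolding z restricted_state_scaleR[OF \<phi>]
      by simp
  qed
qed

lemma frakF_memI:
  assumes contraction: "\<And>c. norm (c - y * c) \<le> norm c"
  shows "y \<in> frakF J"
proof (cases "unital TYPE('a)")
  case True
  then have "y * unit_id = y" "norm (unit_id :: 'a) = 1"
    using is_unit_id_unit_id unfolding is_unit_id_def by auto
  then show ?thesis
    using contraction[of unit_id] unfolding frakF_def A1norm_unital[OF True] by simp
next
  case False
  have "A1norm J (- y) 1 \<le> 1"
  proof (rule A1norm_le[OF J False])
    fix c :: 'a
    assume "norm c \<le> 1"
    then show "norm (- y * c + cscale J 1 c) \<le> 1"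
      using contraction[of c] by simp
  qed
  then show ?thesis
    unfolding frakF_def by simp
qed

lemma frakr_right_inverse_in_frakF:
  assumes a: "a \<in> frakr J" and t: "0 \<le> t" and y: "y + (t *\<^sub>R a) * y = t *\<^sub>R a"
  shows "y \<in> frakF J"
proof (rule frakF_memI)
  fix c
  have "(t *\<^sub>R a) * (c - y * c) = (t *\<^sub>R a) * c - ((t *\<^sub>R a) * y) * c"
    by (simp add: algebra_simps)
  also have "\<dots> = y * c"
    using y by (metis add_diff_cancel_left' diff_diff_eq2 left_diff_distrib)
  finally have "c = (c - y * c) + t *\<^sub>R (a * (c - y * c))"
    by simp
  then show "norm (c - y * c) \<le> norm c"
    using frakr_accretive[OF J a t, of "c - y * c"] by simp
qed

lemma frakr_approximation:
  assumes a: "a \<in> frakr J" and t: "0 < t" "t * norm a \<le> 1 / 2"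
  obtains b where "b \<in> frakF J" and "dist ((1 / t) *\<^sub>R b) a \<le> 2 * t * (norm a)\<^sup>2"
proof -
  define x where "x = t *\<^sub>R a"
  have norm_x: "norm x = t * norm a"
    unfolding x_def using t by simp
  obtain y where y: "y + x * y = x" and y_small: "(1 - norm x) * norm y \<le> norm x"
    using exists_right_inverse_one_plus[of x] norm_x t by auto
  have "(1 / 2) * norm y \<le> (1 - norm x) * norm y"
    using norm_x t by (intro mult_right_mono) simp_all
  then have norm_y: "norm y \<le> 2 * (t * norm a)"
    using y_small norm_x by linarith
  have "y \<in> frakF J"
    using frakr_right_inverse_in_frakF[OF a _ y[unfolded x_def]] t by simp
  have "(1 / t) *\<^sub>R y - a = - (a * y)"
  proof -
    have "(1 / t) *\<^sub>R (y + x * y) = a"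
      using y t by (simp add: x_def)
    then have "(1 / t) *\<^sub>R y + a * y = a"
      using t by (simp add: x_def scaleR_add_right)
    then show ?thesis
      by (simp add: algebra_simps)
  qed
  then have "dist ((1 / t) *\<^sub>R y) a \<le> norm a * norm y"
    by (simp add: dist_norm norm_mult_ineq)
  also have "\<dots> \<le> 2 * t * (norm a)\<^sup>2"
    using mult_left_mono[OF norm_y norm_ge_zero[of a]] by (simp add: power2_eq_square mult_ac)
  finally show ?thesis
    using \<open>y \<in> frakF J\<close> that by blast
qed

lemma frakr_subset_closure_cone: "frakr J \<subseteq> closure {t *\<^sub>R a | t a. 0 \<le> t \<and> a \<in> frakF J}"
proof
  fix a
  assume a: "a \<in> frakr J"
  show "a \<in> closure {t *\<^sub>R a | t a. 0 \<le> t \<and> a \<in> frakF J}"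
    unfolding closure_approachable
  proof (intro allI impI)
    fix e :: real
    assume e: "0 < e"
    define K where "K = norm a + 1"
    define t where "t = min (1 / (2 * K)) (e / (4 * K\<^sup>2))"
    have K: "1 \<le> K" "norm a \<le> K"
      unfolding K_def by simp_all
    have t: "0 < t" "t * K \<le> 1 / 2" "t * K\<^sup>2 \<le> e / 4"
      using K e unfolding t_def by (auto simp: min_def field_simps)
    have "t * norm a \<le> 1 / 2"
      using t K(2) mult_left_mono[OF K(2), of t] by linarith
    then obtain b where b: "b \<in> frakF J" "dist ((1 / t) *\<^sub>R b) a \<le> 2 * t * (norm a)\<^sup>2"
      using frakr_approximation[OF a t(1)] by blast
    have "2 * t * (norm a)\<^sup>2 \<le> 2 * (t * K\<^sup>2)"
      using t K by (simp add: power_mono)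
    then have "dist ((1 / t) *\<^sub>R b) a < e"
      using b(2) t e by linarith
    moreover have "(1 / t) *\<^sub>R b \<in> {t *\<^sub>R a | t a. 0 \<le> t \<and> a \<in> frakF J}"
      using b(1) t by (intro CollectI exI[of _ "1 / t"] exI[of _ b]) simp
    ultimately show "\<exists>z\<in>{t *\<^sub>R a | t a. 0 \<le> t \<and> a \<in> frakF J}. dist z a < e"
      by blast
  qed
qed

end

theorem proposition3p5:
  fixes J :: "'a::{real_normed_algebra,banach} \<Rightarrow> 'a"
  assumes "complex_banach_algebra J"
    and "approx_unital TYPE('a)"
  shows "closure {t *\<^sub>R a | t a. t \<ge> 0 \<and> a \<in> frakF J} = frakr J"
proof (rule antisym)
  show "closure {t *\<^sub>R a | t a. t \<ge> 0 \<and> a \<in> frakF J} \<subseteq> frakr J"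
    by (rule closure_minimal[OF cone_frakF_subset_frakr[OF assms(1)] closed_frakr[OF assms(1)]])
  show "frakr J \<subseteq> closure {t *\<^sub>R a | t a. t \<ge> 0 \<and> a \<in> frakF J}"
    by (rule frakr_subset_closure_cone[OF assms(1)])
qed

end
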